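(* Let $G$ be a cyclic group of order $3$ and $p \neq 2$ a prime, and let $\mathbb{Z}_{(p)} = \{ m/n : m,n \in \mathbb{Z},\ \gcd(p,n)=1\}$. Then the group ring $\mathbb{Z}_{(p)}G$ is $\Sigma$-strongly clean.
   Context: All rings are associative with identity. For a positive integer $n$, an element $x \in R$ is $n$-strongly clean if $x = e + u_1 + \cdots + u_n$ where $e^2=e$, $u_1,\dots,u_n$ are units of $R$, and $eu_i = u_i e$ for all $i$. An element of $R$ is $\Sigma$-strongly clean if it is $n$-strongly clean for some positive integer $n$; $R$ is $\Sigma$-strongly clean if every element of $R$ is $\Sigma$-strongly clean. *)

theory Defs
  imports "HOL-Computational_Algebra.Primes" "HOL-Algebra.Algebra"
begin

definition Zloc :: "nat \<Rightarrow> rat set" where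
  "Zloc p = {of_int m / of_int n | m n :: int. gcd (int p) n = 1}"

text \<open>The group ring Z_(p)G for G = <g> cyclic of order 3.  An element
  a0 + a1 g + a2 g^2 is represented by the triple (a0, a1, a2); multiplication
  is the convolution induced by g^3 = 1.\<close>
fun C3_mult :: "rat \<times> rat \<times> rat \<Rightarrow> rat \<times> rat \<times> rat \<Rightarrow> rat \<times> rat \<times> rat" where
  "C3_mult (a0, a1, a2) (b0, b1, b2) =
     (a0 * b0 + a1 * b2 + a2 * b1,
      a0 * b1 + a1 * b0 + a2 * b2,
      a0 * b2 + a1 * b1 + a2 * b0)"

fun C3_add :: "rat \<times> rat \<times> rat \<Rightarrow> rat \<times> rat \<times> rat \<Rightarrow> rat \<times> rat \<times> rat" where
  "C3_add (a0, a1, a2) (b0, b1, b2) = (a0 + b0, a1 + b1, a2 + b2)"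

definition C3_group_ring :: "nat \<Rightarrow> (rat \<times> rat \<times> rat) ring" where
  "C3_group_ring p =
    \<lparr> carrier = Zloc p \<times> Zloc p \<times> Zloc p,
      monoid.mult = C3_mult,
      one = (1, 0, 0),
      ring.zero = (0, 0, 0),
      ring.add = C3_add \<rparr>"

definition n_strongly_clean :: "('a, 'b) ring_scheme \<Rightarrow> nat \<Rightarrow> 'a \<Rightarrow> bool" where
  "n_strongly_clean R n x \<longleftrightarrow>
     (\<exists>e u. e \<in> carrier R \<and> e \<otimes>\<^bsub>R\<^esub> e = e \<and>
        (\<forall>i\<in>{1..n}. u i \<in> Units R \<and> e \<otimes>\<^bsub>R\<^esub> u i = u i \<otimes>\<^bsub>R\<^esub> e) \<and>
        x = e \<oplus>\<^bsub>R\<^esub> (finsum R u {1..n}))"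

definition Sigma_strongly_clean_elem :: "('a, 'b) ring_scheme \<Rightarrow> 'a \<Rightarrow> bool" where
  "Sigma_strongly_clean_elem R x \<longleftrightarrow> (\<exists>n. n \<ge> 1 \<and> n_strongly_clean R n x)"

definition Sigma_strongly_clean :: "('a, 'b) ring_scheme \<Rightarrow> bool" where
  "Sigma_strongly_clean R \<longleftrightarrow> (\<forall>x \<in> carrier R. Sigma_strongly_clean_elem R x)"

end

theory Submission
  imports Defs
begin

(* In any ring, a sum of n >= 1 units is n-strongly clean, with the
   idempotent 0; so it suffices to write every element of Z_(p)G, G = <g> of order 3, as a
   sum of units.  For an odd prime p every element of the local ring Z_(p) is a sum of two
   units: writing a = m/n with p not dividing n, p cannot divide both m - n and m - 2n, so
   a = 1 + (m - n)/n or a = 2 + (m - 2n)/n, and 2 is a unit because p is odd.  Every c g^k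
   with c a unit of Z_(p) is a unit of Z_(p)G, hence a0 + a1 g + a2 g^2 is a sum of
   2 + 2 + 2 = 6 units. *)

definition unit_sum :: "('a, 'b) ring_scheme \<Rightarrow> nat \<Rightarrow> 'a \<Rightarrow> bool" where
  "unit_sum R n x \<longleftrightarrow> (\<exists>u. (\<forall>i\<in>{1..n}. u i \<in> Units R) \<and> x = finsum R u {1..n})"

lemma (in ring) unit_sum_single:
  assumes "u \<in> Units R"
  shows "unit_sum R 1 u"
  unfolding unit_sum_def using assms
  by (intro exI[of _ "\<lambda>_. u"]) (auto simp: Units_def)

lemma (in ring) unit_sum_add:
  assumes x: "unit_sum R n x" and y: "unit_sum R m y"
  shows "unit_sum R (n + m) (x \<oplus> y)"
proof -
  obtain u where u: "\<forall>i\<in>{1..n}. u i \<in> Units R" and x_eq: "x = finsum R u {1..n}"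
    using x unfolding unit_sum_def by blast
  obtain v where v: "\<forall>i\<in>{1..m}. v i \<in> Units R" and y_eq: "y = finsum R v {1..m}"
    using y unfolding unit_sum_def by blast
  define w where "w i = (if i \<le> n then u i else v (i - n))" for i
  have w_units: "\<forall>i\<in>{1..n + m}. w i \<in> Units R"
  proof
    fix i assume i: "i \<in> {1..n + m}"
    show "w i \<in> Units R"
    proof (cases "i \<le> n")
      case False
      with i have "i - n \<in> {1..m}"
        by auto
      with False v show ?thesis
        by (simp add: w_def)
    qed (use i u in \<open>simp add: w_def\<close>)
  qed
  then have w_carrier: "w \<in> {1..n + m} \<rightarrow> carrier R"
    by (auto simp: Units_def)
  have split: "{1..n + m} = {1..n} \<union> (\<lambda>i. i + n) ` {1..m}"
    by auto
  have "finsum R w {1..n + m} = finsum R w {1..n} \<oplus> finsum R w ((\<lambda>i. i + n) ` {1..m})"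
    unfolding split using w_carrier split by (intro finsum_Un_disjoint) auto
  also have "finsum R w {1..n} = x"
    unfolding x_eq using w_carrier by (intro finsum_cong) (auto simp: w_def)
  also have "finsum R w ((\<lambda>i. i + n) ` {1..m}) = finsum R (\<lambda>i. w (i + n)) {1..m}"
    using w_carrier split by (intro finsum_reindex) auto
  also have "\<dots> = y"
    unfolding y_eq using v by (intro finsum_cong) (auto simp: w_def Units_def)
  finally show ?thesis
    unfolding unit_sum_def using w_units by (intro exI[of _ w]) simp
qed

lemma (in ring) unit_sum_mult_unit:
  assumes x: "unit_sum R n x" and w: "w \<in> Units R"
  shows "unit_sum R n (x \<otimes> w)"
proof -
  obtain u where u: "\<forall>i\<in>{1..n}. u i \<in> Units R" and x_eq: "x = finsum R u {1..n}"
    using x unfolding unit_sum_def by blast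
  have "u \<in> {1..n} \<rightarrow> carrier R"
    using u by (blast intro: Units_closed)
  then have "x \<otimes> w = finsum R (\<lambda>i. u i \<otimes> w) {1..n}"
    unfolding x_eq using Units_closed[OF w] by (intro finsum_ldistr) simp_all
  moreover have "\<forall>i\<in>{1..n}. u i \<otimes> w \<in> Units R"
    using u w by (blast intro: Units_m_closed)
  ultimately show ?thesis
    unfolding unit_sum_def by (intro exI[of _ "\<lambda>i. u i \<otimes> w"]) blast
qed

lemma (in ring) unit_sum_Sigma_strongly_clean:
  assumes "unit_sum R n x" and "n \<ge> 1"
  shows "Sigma_strongly_clean_elem R x"
proof -
  obtain u where u: "\<forall>i\<in>{1..n}. u i \<in> Units R" and x_eq: "x = finsum R u {1..n}"
    using assms(1) unfolding unit_sum_def by blast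
  have "finsum R u {1..n} \<in> carrier R"
    using u by (intro finsum_closed) (auto simp: Units_def)
  then have "n_strongly_clean R n x"
    unfolding n_strongly_clean_def x_eq using u
    by (intro exI[of _ \<zero>] exI[of _ u]) (auto simp: Units_def)
  then show ?thesis
    unfolding Sigma_strongly_clean_elem_def using assms(2) by blast
qed

text \<open>Every element of Z_(p) has a representation with a nonzero denominator prime to p
  (the definition also admits the denominator 0, which only produces 0 = 0/1).\<close>
lemma Zloc_iff:
  "q \<in> Zloc p \<longleftrightarrow> (\<exists>m n. n \<noteq> 0 \<and> coprime (int p) n \<and> q = of_int m / of_int n)"
proof
  assume "q \<in> Zloc p"
  then obtain m n where q: "q = of_int m / of_int n" and cop: "coprime (int p) n"
    unfolding Zloc_def by (auto simp flip: coprime_iff_gcd_eq_1)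
  show "\<exists>m n. n \<noteq> 0 \<and> coprime (int p) n \<and> q = of_int m / of_int n"
  proof (cases "n = 0")
    case True
    then have "q = of_int 0 / of_int 1"
      using q by simp
    then show ?thesis
      by (metis coprime_1_right one_neq_zero)
  next
    case False
    with q cop show ?thesis
      by blast
  qed
next
  assume "\<exists>m n. n \<noteq> 0 \<and> coprime (int p) n \<and> q = of_int m / of_int n"
  then show "q \<in> Zloc p"
    unfolding Zloc_def by (auto simp flip: coprime_iff_gcd_eq_1)
qed

lemma Zloc_of_int: "of_int k \<in> Zloc p"
  unfolding Zloc_iff by (intro exI[of _ k] exI[of _ 1]) simp

lemma Zloc_zero: "0 \<in> Zloc p" and Zloc_one: "1 \<in> Zloc p"
  using Zloc_of_int[of 0 p] Zloc_of_int[of 1 p] by simp_all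

lemma Zloc_add:
  assumes "a \<in> Zloc p" and "b \<in> Zloc p"
  shows "a + b \<in> Zloc p"
proof -
  obtain m n m' n' where "n \<noteq> 0" "coprime (int p) n" "a = of_int m / of_int n"
    and "n' \<noteq> 0" "coprime (int p) n'" "b = of_int m' / of_int n'"
    using assms unfolding Zloc_iff by blast
  then have "n * n' \<noteq> 0" "coprime (int p) (n * n')"
    and "a + b = of_int (m * n' + m' * n) / of_int (n * n')"
    by (simp_all add: field_simps)
  then show ?thesis
    unfolding Zloc_iff by blast
qed

lemma Zloc_mult:
  assumes "a \<in> Zloc p" and "b \<in> Zloc p"
  shows "a * b \<in> Zloc p"
proof -
  obtain m n m' n' where "n \<noteq> 0" "coprime (int p) n" "a = of_int m / of_int n"
    and "n' \<noteq> 0" "coprime (int p) n'" "b = of_int m' / of_int n'"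
    using assms unfolding Zloc_iff by blast
  then have "n * n' \<noteq> 0" "coprime (int p) (n * n')"
    and "a * b = of_int (m * m') / of_int (n * n')"
    by simp_all
  then show ?thesis
    unfolding Zloc_iff by blast
qed

lemma Zloc_uminus:
  assumes "a \<in> Zloc p"
  shows "- a \<in> Zloc p"
  using Zloc_mult[OF Zloc_of_int[of "-1"] assms] by simp

definition Zloc_unit :: "nat \<Rightarrow> rat \<Rightarrow> bool" where
  "Zloc_unit p c \<longleftrightarrow> c \<in> Zloc p \<and> c \<noteq> 0 \<and> inverse c \<in> Zloc p"

lemma Zloc_unit_quotient:
  assumes p: "Factorial_Ring.prime p"
    and m: "coprime (int p) m" and n: "coprime (int p) n"
  shows "Zloc_unit p (of_int m / of_int n)"
proof -
  have "\<not> is_unit (int p)"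
    using p not_prime_unit[of "int p"] by auto
  then have "m \<noteq> 0" and "n \<noteq> 0"
    using m n by auto
  then have "of_int m / of_int n \<noteq> (0 :: rat)"
    and "inverse (of_int m / of_int n) = (of_int n / of_int m :: rat)"
    by simp_all
  with \<open>m \<noteq> 0\<close> \<open>n \<noteq> 0\<close> m n show ?thesis
    unfolding Zloc_unit_def Zloc_iff by metis
qed

text \<open>The key arithmetic fact: for an odd prime p, every element of Z_(p) is the sum of
  two units.  This fails for p = 2, where the residue field has only two elements.\<close>
lemma Zloc_sum_of_two_units:
  assumes p: "Factorial_Ring.prime p" and odd: "p \<noteq> 2" and a: "a \<in> Zloc p"
  shows "\<exists>u v. Zloc_unit p u \<and> Zloc_unit p v \<and> a = u + v"
proof -
  obtain m n where "n \<noteq> 0" and n: "coprime (int p) n" and a_eq: "a = of_int m / of_int n"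
    using a unfolding Zloc_iff by blast
  have p_int: "Factorial_Ring.prime (int p)"
    using p by simp
  have shift: "a = of_int k / of_int 1 + of_int (m - k * n) / of_int n" for k
    using a_eq \<open>n \<noteq> 0\<close> by (simp add: field_simps)
  have split: ?thesis if "coprime (int p) k" and "coprime (int p) (m - k * n)" for k
    using shift[of k] Zloc_unit_quotient[OF p that(1), of 1]
      Zloc_unit_quotient[OF p that(2) n] by auto
  have "\<not> p dvd 2"
    using odd prime_ge_2_nat[OF p] by (auto dest: dvd_imp_le)
  then have two: "coprime (int p) 2"
    using p_int prime_imp_coprime[of "int p" 2] by auto
  show ?thesis
  proof (cases "int p dvd m - n")
    case False
    then show ?thesis
      using split[of 1] p_int prime_imp_coprime[of "int p" "m - n"] by simp
  next
    case True
    have "\<not> int p dvd m - 2 * n"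
    proof
      assume "int p dvd m - 2 * n"
      with True have "int p dvd (m - n) - (m - 2 * n)"
        by (rule dvd_diff)
      then have "int p dvd n"
        by simp
      with n p_int show False
        by (metis coprime_absorb_left not_prime_unit)
    qed
    then show ?thesis
      using split[of 2] two p_int prime_imp_coprime[of "int p" "m - 2 * n"] by simp
  qed
qed

lemma C3_carrier_iff [simp]:
  "(a, b, c) \<in> carrier (C3_group_ring p) \<longleftrightarrow> a \<in> Zloc p \<and> b \<in> Zloc p \<and> c \<in> Zloc p"
  by (simp add: C3_group_ring_def)

lemma C3_group_ring_simps [simp]:
  "x \<otimes>\<^bsub>C3_group_ring p\<^esub> y = C3_mult x y"
  "x \<oplus>\<^bsub>C3_group_ring p\<^esub> y = C3_add x y"
  "\<one>\<^bsub>C3_group_ring p\<^esub> = (1, 0, 0)"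
  "\<zero>\<^bsub>C3_group_ring p\<^esub> = (0, 0, 0)"
  by (simp_all add: C3_group_ring_def)

lemma C3_add_comm: "C3_add x y = C3_add y x"
  and C3_add_assoc: "C3_add (C3_add x y) z = C3_add x (C3_add y z)"
  and C3_add_zero: "C3_add (0, 0, 0) x = x"
  by (cases x; cases y; cases z; simp)+

lemma C3_mult_comm: "C3_mult x y = C3_mult y x"
  and C3_mult_assoc: "C3_mult (C3_mult x y) z = C3_mult x (C3_mult y z)"
  and C3_mult_one: "C3_mult (1, 0, 0) x = x"
  and C3_mult_distrib: "C3_mult (C3_add x y) z = C3_add (C3_mult x z) (C3_mult y z)"
  by (cases x; cases y; cases z; simp add: algebra_simps)+

lemma C3_add_closed:
  "x \<in> carrier (C3_group_ring p) \<Longrightarrow> y \<in> carrier (C3_group_ring p) \<Longrightarrow>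
    C3_add x y \<in> carrier (C3_group_ring p)"
  by (cases x; cases y) (simp add: Zloc_add)

lemma C3_mult_closed:
  "x \<in> carrier (C3_group_ring p) \<Longrightarrow> y \<in> carrier (C3_group_ring p) \<Longrightarrow>
    C3_mult x y \<in> carrier (C3_group_ring p)"
  by (cases x; cases y) (simp add: Zloc_add Zloc_mult)

lemma C3_group_ring_cring: "cring (C3_group_ring p)"
proof (rule cringI)
  show "abelian_group (C3_group_ring p)"
  proof (rule abelian_groupI)
    fix x assume "x \<in> carrier (C3_group_ring p)"
    then obtain a b c where "x = (a, b, c)" and "a \<in> Zloc p" "b \<in> Zloc p" "c \<in> Zloc p"
      by (cases x) simp
    then show "\<exists>y \<in> carrier (C3_group_ring p). y \<oplus>\<^bsub>C3_group_ring p\<^esub> x = \<zero>\<^bsub>C3_group_ring p\<^esub>"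
      by (intro bexI[of _ "(-a, -b, -c)"]) (simp_all add: Zloc_uminus)
  qed (simp_all add: Zloc_zero C3_add_closed C3_add_assoc C3_add_zero, rule C3_add_comm)
  show "comm_monoid (C3_group_ring p)"
    by (rule comm_monoidI)
      (simp_all add: Zloc_zero Zloc_one C3_mult_closed C3_mult_assoc C3_mult_one, rule C3_mult_comm)
qed (simp add: C3_mult_distrib)

interpretation C3: cring "C3_group_ring p" for p
  by (rule C3_group_ring_cring)

lemma C3_unitI:
  assumes "x \<in> carrier (C3_group_ring p)" and "y \<in> carrier (C3_group_ring p)"
    and "C3_mult x y = (1, 0, 0)"
  shows "x \<in> Units (C3_group_ring p)"
  using assms C3_mult_comm[of x y] unfolding Units_def by auto

lemma C3_scalar_unit:
  assumes "Zloc_unit p c"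
  shows "(c, 0, 0) \<in> Units (C3_group_ring p)"
  using assms by (intro C3_unitI[of _ _ "(inverse c, 0, 0)"]) (simp_all add: Zloc_unit_def Zloc_zero)

lemma C3_generator_unit: "(0, 1, 0) \<in> Units (C3_group_ring p)"
  by (intro C3_unitI[of _ _ "(0, 0, 1)"]) (simp_all add: Zloc_zero Zloc_one)

lemma C3_scalar_unit_sum:
  assumes "Factorial_Ring.prime p" and "p \<noteq> 2" and "a \<in> Zloc p"
  shows "unit_sum (C3_group_ring p) 2 (a, 0, 0)"
proof -
  obtain u v where "Zloc_unit p u" and "Zloc_unit p v" and a_eq: "a = u + v"
    using Zloc_sum_of_two_units[OF assms] by blast
  then have "unit_sum (C3_group_ring p) (1 + 1) ((u, 0, 0) \<oplus>\<^bsub>C3_group_ring p\<^esub> (v, 0, 0))"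
    by (intro C3.unit_sum_add C3.unit_sum_single C3_scalar_unit)
  then show ?thesis
    by (simp add: a_eq numeral_2_eq_2)
qed

theorem corollary1p15:
  fixes p :: nat
  assumes "Factorial_Ring.prime p" and "p \<noteq> 2"
  shows "Sigma_strongly_clean (C3_group_ring p)"
  unfolding Sigma_strongly_clean_def
proof
  let ?R = "C3_group_ring p"
  fix x assume "x \<in> carrier ?R"
  then obtain a0 a1 a2 where x: "x = (a0, a1, a2)"
    and a: "a0 \<in> Zloc p" "a1 \<in> Zloc p" "a2 \<in> Zloc p"
    by (cases x) simp
  define g where "g = ((0, 1, 0) :: rat \<times> rat \<times> rat)"
  have g: "g \<in> Units ?R"
    unfolding g_def by (rule C3_generator_unit)
  have g2: "g \<otimes>\<^bsub>?R\<^esub> g \<in> Units ?R"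
    by (intro C3.Units_m_closed g)
  have "x = (a0, 0, 0) \<oplus>\<^bsub>?R\<^esub> ((a1, 0, 0) \<otimes>\<^bsub>?R\<^esub> g \<oplus>\<^bsub>?R\<^esub> (a2, 0, 0) \<otimes>\<^bsub>?R\<^esub> (g \<otimes>\<^bsub>?R\<^esub> g))"
    by (simp add: x g_def)
  moreover have "unit_sum ?R (2 + (2 + 2)) \<dots>"
    using C3_scalar_unit_sum[OF assms] a g g2
    by (intro C3.unit_sum_add C3.unit_sum_mult_unit) auto
  ultimately have "unit_sum ?R 6 x"
    by simp
  then show "Sigma_strongly_clean_elem ?R x"
    by (rule C3.unit_sum_Sigma_strongly_clean) simp
qed

end
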